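(* Let $\mathcal R$ be the set of isomorphism classes of rooted trees, and for $T_0\in\mathcal R$ let $v(T_0)$ be its number of (non-root) vertices and $n(T_0)$ its number of leaves. Then, as formal power series in $x$, $$\sum_{T_0\in\mathcal R}\frac{(-1)^{v(T_0)}x^{n(T_0)}}{|\mathrm{Aut}(T_0)|}=\log(1+x)=\sum_{n\ge1}\frac{(-1)^{n+1}}{n}x^n.$$
   Context: A rooted tree is a finite connected acyclic graph with one distinguished extra univalent end called the root and at least one further free end called a leaf (a leaf is a dangling half-edge, not counted as a vertex), such that every vertex other than the root has degree at least $3$; the root is not counted among the vertices. The smallest rooted tree consists of the root joined directly to a single leaf, with no vertices. $\mathrm{Aut}(T_0)$ is the group of graph automorphisms of $T_0$ fixing the root (leaves are unlabeled and may be permuted). For example, the rooted trees with one vertex and $n\ge2$ leaves contribute $(-1)\,x^n/n!$, and the rooted tree whose vertex adjacent to the root carries one leaf and one further vertex carrying two leaves contributes $(+1)\,x^3/2$. *)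

theory Defs
  imports Main "HOL-Computational_Algebra.Formal_Power_Series"
begin

text \<open>Concrete (plane) representatives of rooted trees. The root half-edge is attached
  to the node at position []; a node with no children is a leaf (free end), a node
  with children is a (non-root) vertex.\<close>

datatype ptree = PNode "ptree list"

fun children :: "ptree \<Rightarrow> ptree list" where
  "children (PNode ts) = ts"

fun subt :: "ptree \<Rightarrow> nat list \<Rightarrow> ptree option" where
  "subt t [] = Some t"
| "subt (PNode ts) (i # p) = (if i < length ts then subt (ts ! i) p else None)"

definition pos :: "ptree \<Rightarrow> nat list set" where
  "pos t = {p. subt t p \<noteq> None}"

definition nchildren :: "ptree \<Rightarrow> nat list \<Rightarrow> nat" where
  "nchildren t p = length (children (the (subt t p)))"

text \<open>Every non-root vertex has degree at least 3, i.e. at least 2 children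
  (its parent edge counts 1); leaves have no children.\<close>
definition valid_rtree :: "ptree \<Rightarrow> bool" where
  "valid_rtree t \<longleftrightarrow> (\<forall>p\<in>pos t. nchildren t p = 0 \<or> nchildren t p \<ge> 2)"

definition nleaves :: "ptree \<Rightarrow> nat" where
  "nleaves t = card {p \<in> pos t. nchildren t p = 0}"

definition nverts :: "ptree \<Rightarrow> nat" where
  "nverts t = card {p \<in> pos t. nchildren t p \<noteq> 0}"

text \<open>Adjacency in the underlying graph (positions are nodes, edges join a node to
  its parent). The root end is adjacent exactly to position [].\<close>
definition adj :: "nat list \<Rightarrow> nat list \<Rightarrow> bool" where
  "adj p q \<longleftrightarrow> (q \<noteq> [] \<and> p = butlast q) \<or> (p \<noteq> [] \<and> q = butlast p)"

text \<open>Graph isomorphisms fixing the root (the root end is fixed iff its neighbour [] is).\<close>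
definition tree_iso :: "ptree \<Rightarrow> ptree \<Rightarrow> (nat list \<Rightarrow> nat list) \<Rightarrow> bool" where
  "tree_iso s t f \<longleftrightarrow> bij_betw f (pos s) (pos t) \<and> f [] = [] \<and>
     (\<forall>p\<in>pos s. \<forall>q\<in>pos s. adj p q \<longleftrightarrow> adj (f p) (f q))"

definition iso_rel :: "(ptree \<times> ptree) set" where
  "iso_rel = {(s, t). valid_rtree s \<and> valid_rtree t \<and> (\<exists>f. tree_iso s t f)}"

definition Aut :: "ptree \<Rightarrow> (nat list \<Rightarrow> nat list) set" where
  "Aut t = {f. tree_iso t t f \<and> (\<forall>p. p \<notin> pos t \<longrightarrow> f p = p)}"

definition rtree_classes :: "ptree set set" where
  "rtree_classes = {t. valid_rtree t} // iso_rel"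

definition rep :: "ptree set \<Rightarrow> ptree" where
  "rep C = (SOME t. t \<in> C)"

definition rtree_gf :: "real fps" where
  "rtree_gf = Abs_fps (\<lambda>n. \<Sum>C \<in> {C \<in> rtree_classes. nleaves (rep C) = n}.
      (-1) ^ nverts (rep C) / real (card (Aut (rep C))))"

end

theory Submission
  imports Defs "HOL-Combinatorics.Permutations"
begin

text \<open>
  We sum over plane trees (trees with ordered children) instead of isomorphism classes.
  An isomorphism out of a node amounts to a permutation of its children together with
  isomorphisms of the branches, so the isomorphisms out of a plane tree t number
  c(t) = product over the vertices v of (number of children of v)!. Since they also number
  |class of t| * |Aut t|, the class of t contributes (-1)^v(t) / |Aut t| exactly when each
  plane tree s is weighted by (-1)^v(s) / c(s). Removing the root vertex of a plane tree
  leaves an ordered forest of k >= 2 plane trees and multiplies the weight by -1/k!, so the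
  generating function satisfies F = x - sum_{k >= 2} F^k / k!, i.e. exp F - 1 = x, and
  hence F = log (1 + x).
\<close>

unbundle fps_syntax

section \<open>Positions in plane trees\<close>

lemma subt_append:
  "subt t (p @ q) = (case subt t p of None \<Rightarrow> None | Some u \<Rightarrow> subt u q)"
proof (induction p arbitrary: t)
  case (Cons i p)
  then show ?case by (cases t) auto
qed simp

lemma Nil_in_pos [simp]: "[] \<in> pos t"
  by (simp add: pos_def)

lemma Cons_in_pos_PNode [simp]: "i # p \<in> pos (PNode ts) \<longleftrightarrow> i < length ts \<and> p \<in> pos (ts ! i)"
  by (simp add: pos_def)

lemma pos_PNode: "pos (PNode ts) = insert [] (\<Union>i<length ts. (#) i ` pos (ts ! i))"
proof (intro set_eqI iffI)
  show "p \<in> insert [] (\<Union>i<length ts. (#) i ` pos (ts ! i))" if "p \<in> pos (PNode ts)" for p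
    using that by (cases p) auto
qed auto

lemma take_in_pos: "p \<in> pos t \<Longrightarrow> take j p \<in> pos t"
  using subt_append[of t "take j p" "drop j p"] by (auto simp: pos_def split: option.splits)

lemma butlast_in_pos: "p \<in> pos t \<Longrightarrow> butlast p \<in> pos t"
  by (simp add: butlast_conv_take take_in_pos)

lemma finite_pos: "finite (pos t)"
  by (induction t) (simp add: pos_PNode)

lemma nchildren_PNode_Nil [simp]: "nchildren (PNode ts) [] = length ts"
  by (simp add: nchildren_def)

lemma nchildren_PNode_Cons [simp]:
  "i < length ts \<Longrightarrow> nchildren (PNode ts) (i # p) = nchildren (ts ! i) p"
  by (simp add: nchildren_def)

lemma card_pos_PNode:
  "card {p \<in> pos (PNode ts). P (nchildren (PNode ts) p)} =
     (if P (length ts) then 1 else 0) + (\<Sum>t\<leftarrow>ts. card {p \<in> pos t. P (nchildren t p)})"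
proof -
  let ?B = "\<lambda>i. (#) i ` {p \<in> pos (ts ! i). P (nchildren (ts ! i) p)}"
  have split: "{p \<in> pos (PNode ts). P (nchildren (PNode ts) p)} =
      (if P (length ts) then {[]} else {}) \<union> (\<Union>i<length ts. ?B i)"
    by (auto simp: pos_PNode)
  have "card (\<Union>i<length ts. ?B i) = (\<Sum>i<length ts. card (?B i))"
    by (rule card_UN_disjoint) (auto simp: finite_pos)
  also have "\<dots> = (\<Sum>t\<leftarrow>ts. card {p \<in> pos t. P (nchildren t p)})"
    by (simp add: card_image sum_list_sum_nth atLeast0LessThan)
  finally show ?thesis
    unfolding split by (subst card_Un_disjoint) (auto simp: finite_pos)
qed

lemma nleaves_PNode: "nleaves (PNode ts) = (if ts = [] then 1 else (\<Sum>t\<leftarrow>ts. nleaves t))"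
  using card_pos_PNode[where P = "\<lambda>n. n = 0"] by (simp add: nleaves_def)

lemma nverts_PNode: "nverts (PNode ts) = (if ts = [] then 0 else 1 + (\<Sum>t\<leftarrow>ts. nverts t))"
  using card_pos_PNode[where P = "\<lambda>n. n \<noteq> 0"] by (simp add: nverts_def)

lemma valid_rtree_PNode:
  "valid_rtree (PNode ts) \<longleftrightarrow> length ts \<noteq> 1 \<and> (\<forall>t\<in>set ts. valid_rtree t)"
proof -
  have "(length ts = 0 \<or> 2 \<le> length ts) \<longleftrightarrow> length ts \<noteq> 1" by arith
  then show ?thesis
    unfolding valid_rtree_def pos_PNode by (auto simp: all_set_conv_all_nth)
qed

lemma nleaves_pos: "nleaves t > 0"
proof (induction t)
  case (PNode ts)
  then show ?case
    by (cases ts) (auto simp: nleaves_PNode add_pos_nonneg)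
qed

lemma length_le_nleaves_PNode: "length ts \<le> nleaves (PNode ts)"
proof -
  have "(\<Sum>t\<leftarrow>ts. 1) \<le> (\<Sum>t\<leftarrow>ts. nleaves t)"
    by (rule sum_list_mono) (simp add: Suc_leI nleaves_pos)
  then show ?thesis by (simp add: nleaves_PNode sum_list_triv)
qed

lemma nleaves_child_less:
  assumes "valid_rtree (PNode ts)" "t \<in> set ts"
  shows "nleaves t < nleaves (PNode ts)"
proof -
  have "length ts \<noteq> 1" using assms(1) by (simp add: valid_rtree_PNode)
  moreover have "length ts > 0" using assms(2) by (auto simp: length_pos_if_in_set)
  ultimately have "2 \<le> length ts" by linarith
  moreover have "length (remove1 t ts) = length ts - 1"
    using assms(2) by (simp add: length_remove1)
  ultimately have "remove1 t ts \<noteq> []" by auto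
  then obtain u where u: "u \<in> set (remove1 t ts)" by (meson list.set_sel(1))
  have "nleaves u \<le> (\<Sum>u\<leftarrow>remove1 t ts. nleaves u)"
    using u by (simp add: member_le_sum_list)
  then have "0 < (\<Sum>u\<leftarrow>remove1 t ts. nleaves u)"
    using nleaves_pos[of u] by linarith
  then show ?thesis
    using assms(2) sum_list_map_remove1[of t ts nleaves] by (auto simp: nleaves_PNode)
qed

section \<open>Isomorphisms as prefix-preserving bijections\<close>

definition prefix_iso :: "ptree \<Rightarrow> ptree \<Rightarrow> (nat list \<Rightarrow> nat list) \<Rightarrow> bool" where
  "prefix_iso s t f \<longleftrightarrow> bij_betw f (pos s) (pos t) \<and>
     (\<forall>p\<in>pos s. length (f p) = length p \<and> (\<forall>j. f (take j p) = take j (f p)))"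

lemma tree_iso_length_butlast:
  assumes iso: "tree_iso s t f" and p: "p \<in> pos s"
  shows "length (f p) = length p \<and> f (butlast p) = butlast (f p)"
  using p
proof (induction "length p" arbitrary: p)
  case 0
  then show ?case using iso by (simp add: tree_iso_def)
next
  case (Suc n)
  define q where "q = butlast p"
  have q: "q \<in> pos s" "length q = n" "p \<noteq> []"
    using Suc by (auto simp: q_def butlast_in_pos)
  have IH: "length (f q) = n" "f (butlast q) = butlast (f q)"
    using Suc(1)[OF q(2)[symmetric] q(1)] q(2) by auto
  have "adj (f q) (f p)"
    using iso q Suc(3) by (auto simp: tree_iso_def adj_def q_def)
  moreover have "\<not> (f q \<noteq> [] \<and> f p = butlast (f q))"
  proof
    assume "f q \<noteq> [] \<and> f p = butlast (f q)"
    \<comment> \<open>then p and its grandparent would have the same image\<close>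
    then have "f (butlast q) = f p" using IH by simp
    then have "butlast q = p"
      using iso q(1) Suc(3) by (auto simp: tree_iso_def bij_betw_def butlast_in_pos dest: inj_onD)
    then show False using q(2) Suc(2) by (metis length_butlast diff_le_self not_less_eq_eq le_refl)
  qed
  ultimately have "f q = butlast (f p)" and "f p \<noteq> []" by (auto simp: adj_def)
  then show ?case using IH(1) Suc(2) by (auto simp: q_def)
qed

lemma tree_iso_take:
  assumes iso: "tree_iso s t f" and p: "p \<in> pos s"
  shows "f (take j p) = take j (f p)"
  using p
proof (induction "length p - j" arbitrary: p)
  case 0
  then show ?case using tree_iso_length_butlast[OF iso] by simp
next
  case (Suc d)
  then have "j < length p" by simp
  then have "f (take j p) = f (take j (butlast p))" by (simp add: take_butlast)
  also have "\<dots> = take j (f (butlast p))"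
    using Suc by (simp add: butlast_in_pos)
  also have "\<dots> = take j (f p)"
    using tree_iso_length_butlast[OF iso Suc(3)] \<open>j < length p\<close> by (simp add: take_butlast)
  finally show ?case .
qed

lemma prefix_iso_imp_tree_iso:
  assumes iso: "prefix_iso s t f"
  shows "tree_iso s t f"
proof -
  have bij: "bij_betw f (pos s) (pos t)" and len: "\<And>p. p \<in> pos s \<Longrightarrow> length (f p) = length p"
    and take: "\<And>p j. p \<in> pos s \<Longrightarrow> f (take j p) = take j (f p)"
    using iso by (auto simp: prefix_iso_def)
  have butlast: "f (butlast p) = butlast (f p)" if "p \<in> pos s" for p
    using take[OF that, of "length p - 1"] len[OF that] by (simp add: butlast_conv_take)
  have parent: "(q \<noteq> [] \<and> p = butlast q) \<longleftrightarrow> (f q \<noteq> [] \<and> f p = butlast (f q))"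
    if p: "p \<in> pos s" and q: "q \<in> pos s" for p q
  proof
    assume "q \<noteq> [] \<and> p = butlast q"
    then show "f q \<noteq> [] \<and> f p = butlast (f q)" using butlast[OF q] len[OF q] by auto
  next
    assume *: "f q \<noteq> [] \<and> f p = butlast (f q)"
    then have "f p = f (butlast q)" using butlast[OF q] by simp
    then have "p = butlast q"
      using bij p butlast_in_pos[OF q] by (auto simp: bij_betw_def dest: inj_onD)
    then show "q \<noteq> [] \<and> p = butlast q" using * len[OF q] by auto
  qed
  have "f [] = []" using take[of "[]" 0] by simp
  then show ?thesis
    using bij parent by (auto simp: tree_iso_def adj_def)
qed

lemma tree_iso_iff_prefix_iso: "tree_iso s t f \<longleftrightarrow> prefix_iso s t f"
proof
  assume iso: "tree_iso s t f"
  then have "bij_betw f (pos s) (pos t)" by (simp add: tree_iso_def)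
  with tree_iso_length_butlast[OF iso] tree_iso_take[OF iso] show "prefix_iso s t f"
    by (simp add: prefix_iso_def)
qed (rule prefix_iso_imp_tree_iso)

lemma prefix_isoI:
  assumes "\<And>p. p \<in> pos s \<Longrightarrow> f p \<in> pos t"
    and "inj_on f (pos s)"
    and "\<And>q. q \<in> pos t \<Longrightarrow> \<exists>p\<in>pos s. f p = q"
    and "\<And>p. p \<in> pos s \<Longrightarrow> length (f p) = length p"
    and "\<And>p j. p \<in> pos s \<Longrightarrow> f (take j p) = take j (f p)"
  shows "prefix_iso s t f"
proof -
  have "f ` pos s = pos t" using assms(1,3) by blast
  then show ?thesis using assms(2,4,5) by (simp add: prefix_iso_def bij_betw_def)
qed

lemma prefix_iso_in_pos: "prefix_iso s t f \<Longrightarrow> p \<in> pos s \<Longrightarrow> f p \<in> pos t"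
  by (auto simp: prefix_iso_def bij_betw_apply)

lemma prefix_iso_inj: "prefix_iso s t f \<Longrightarrow> inj_on f (pos s)"
  by (simp add: prefix_iso_def bij_betw_def)

lemma prefix_iso_surj: "prefix_iso s t f \<Longrightarrow> q \<in> pos t \<Longrightarrow> \<exists>p\<in>pos s. f p = q"
  unfolding prefix_iso_def bij_betw_def by (metis imageE)

lemma prefix_iso_length: "prefix_iso s t f \<Longrightarrow> p \<in> pos s \<Longrightarrow> length (f p) = length p"
  by (simp add: prefix_iso_def)

lemma prefix_iso_take: "prefix_iso s t f \<Longrightarrow> p \<in> pos s \<Longrightarrow> f (take j p) = take j (f p)"
  by (simp add: prefix_iso_def)

lemma prefix_iso_Nil: "prefix_iso s t f \<Longrightarrow> f [] = []"
  using prefix_iso_take[of s t f "[]" 0] by simp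

lemma prefix_iso_cong:
  assumes iso: "prefix_iso s t f" and eq: "\<And>p. p \<in> pos s \<Longrightarrow> f p = g p"
  shows "prefix_iso s t g"
proof -
  have "bij_betw g (pos s) (pos t)"
    using iso eq bij_betw_cong[of "pos s" f g "pos t"] by (simp add: prefix_iso_def)
  moreover have "length (g p) = length p \<and> (\<forall>j. g (take j p) = take j (g p))" if "p \<in> pos s" for p
    using iso eq that take_in_pos[OF that] unfolding prefix_iso_def by metis
  ultimately show ?thesis by (simp add: prefix_iso_def)
qed

lemma prefix_iso_id: "prefix_iso t t id"
  by (simp add: prefix_iso_def)

lemma prefix_iso_comp:
  assumes "prefix_iso s t f" "prefix_iso t u g"
  shows "prefix_iso s u (g \<circ> f)"
proof -
  have "bij_betw (g \<circ> f) (pos s) (pos u)"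
    using assms by (auto simp: prefix_iso_def intro: bij_betw_trans)
  moreover have "length (g (f p)) = length p \<and> (\<forall>j. g (f (take j p)) = take j (g (f p)))"
    if "p \<in> pos s" for p
    using assms that prefix_iso_in_pos[OF assms(1) that] unfolding prefix_iso_def by metis
  ultimately show ?thesis by (simp add: prefix_iso_def)
qed

lemma prefix_iso_inv_into:
  assumes iso: "prefix_iso s t f"
  shows "prefix_iso t s (inv_into (pos s) f)"
proof (rule prefix_isoI)
  have bij: "bij_betw f (pos s) (pos t)" using iso by (simp add: prefix_iso_def)
  then show "inj_on (inv_into (pos s) f) (pos t)"
    by (simp add: bij_betw_def inj_on_inv_into)
  show "inv_into (pos s) f q \<in> pos s" if "q \<in> pos t" for q
    using bij that by (simp add: bij_betw_def inv_into_into)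
  show "\<exists>q\<in>pos t. inv_into (pos s) f q = p" if "p \<in> pos s" for p
    using bij that by (metis bij_betw_apply bij_betw_def inv_into_f_f)
  fix q j assume "q \<in> pos t"
  then obtain p where p: "p \<in> pos s" "q = f p" using iso prefix_iso_surj by metis
  have inj: "inj_on f (pos s)" using bij by (simp add: bij_betw_def)
  show "length (inv_into (pos s) f q) = length q"
    using p inj prefix_iso_length[OF iso] by simp
  show "inv_into (pos s) f (take j q) = take j (inv_into (pos s) f q)"
    using p inj prefix_iso_take[OF iso p(1)] take_in_pos[OF p(1)] by (metis inv_into_f_f)
qed

text \<open>Like Aut, isomorphisms are normalised to the identity off the positions, which makes
  the sets isos s t finite.\<close>

definition isos :: "ptree \<Rightarrow> ptree \<Rightarrow> (nat list \<Rightarrow> nat list) set" where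
  "isos s t = {f. prefix_iso s t f \<and> (\<forall>p. p \<notin> pos s \<longrightarrow> f p = p)}"

lemma Aut_eq_isos: "Aut t = isos t t"
  by (simp add: Aut_def isos_def tree_iso_iff_prefix_iso)

lemma isos_nonempty_iff: "isos s t \<noteq> {} \<longleftrightarrow> (\<exists>f. prefix_iso s t f)"
proof
  assume "\<exists>f. prefix_iso s t f"
  then obtain f where f: "prefix_iso s t f" ..
  then have "prefix_iso s t (\<lambda>p. if p \<in> pos s then f p else p)"
    by (rule prefix_iso_cong) simp
  then have "(\<lambda>p. if p \<in> pos s then f p else p) \<in> isos s t" by (simp add: isos_def)
  then show "isos s t \<noteq> {}" by blast
qed (auto simp: isos_def)

lemma id_in_isos: "id \<in> isos t t"
  by (simp add: isos_def prefix_iso_id)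

lemma isos_sym: "isos s t \<noteq> {} \<Longrightarrow> isos t s \<noteq> {}"
  by (meson isos_nonempty_iff prefix_iso_inv_into)

lemma isos_trans: "isos s t \<noteq> {} \<Longrightarrow> isos t u \<noteq> {} \<Longrightarrow> isos s u \<noteq> {}"
  by (meson isos_nonempty_iff prefix_iso_comp)

lemma inj_on_comp_isos:
  assumes h: "h \<in> isos t s"
  shows "inj_on ((\<circ>) h) (isos t t)"
proof (rule inj_onI)
  fix a b assume a: "a \<in> isos t t" and b: "b \<in> isos t t" and "h \<circ> a = h \<circ> b"
  then have hab: "h (a p) = h (b p)" for p by (metis comp_apply)
  show "a = b"
  proof
    fix p
    show "a p = b p"
    proof (cases "p \<in> pos t")
      case True
      then have "a p \<in> pos t" "b p \<in> pos t"
        using a b by (auto simp: isos_def prefix_iso_in_pos)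
      then show ?thesis using h hab[of p] by (auto simp: isos_def dest: prefix_iso_inj inj_onD)
    qed (use a b in \<open>simp add: isos_def\<close>)
  qed
qed

lemma bij_betw_comp_Aut:
  assumes h: "h \<in> isos t s"
  shows "bij_betw ((\<circ>) h) (Aut t) (isos t s)"
proof -
  have h_iso: "prefix_iso t s h" and h_out: "\<And>p. p \<notin> pos t \<Longrightarrow> h p = p"
    using h by (auto simp: isos_def)
  have "(\<circ>) h ` isos t t \<subseteq> isos t s"
    using h_iso h_out by (auto simp: isos_def intro: prefix_iso_comp)
  moreover have "g \<in> (\<circ>) h ` isos t t" if g: "g \<in> isos t s" for g
  proof
    define a where "a p = (if p \<in> pos t then inv_into (pos t) h (g p) else p)" for p
    have "prefix_iso t t (inv_into (pos t) h \<circ> g)"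
      using g prefix_iso_comp prefix_iso_inv_into[OF h_iso] by (auto simp: isos_def)
    then have "prefix_iso t t a" by (rule prefix_iso_cong) (simp add: a_def)
    then show "a \<in> isos t t" by (simp add: isos_def a_def)
    have "g p \<in> h ` pos t" if "p \<in> pos t" for p
      using g that h_iso by (auto simp: isos_def prefix_iso_def bij_betw_def prefix_iso_in_pos)
    then show "g = h \<circ> a"
      using g h_out by (auto simp: a_def isos_def fun_eq_iff f_inv_into_f)
  qed
  ultimately show ?thesis
    using inj_on_comp_isos[OF h] unfolding Aut_eq_isos by (auto simp: bij_betw_def)
qed

section \<open>Isomorphisms out of a node\<close>

definition child_perm :: "(nat list \<Rightarrow> nat list) \<Rightarrow> nat \<Rightarrow> nat" where
  "child_perm f i = hd (f [i])"

definition branch_map :: "(nat list \<Rightarrow> nat list) \<Rightarrow> nat \<Rightarrow> nat list \<Rightarrow> nat list" where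
  "branch_map f i p = tl (f (i # p))"

definition graft_iso ::
    "ptree list \<Rightarrow> (nat \<Rightarrow> nat) \<Rightarrow> (nat \<Rightarrow> nat list \<Rightarrow> nat list) \<Rightarrow> nat list \<Rightarrow> nat list" where
  "graft_iso ts \<sigma> g q = (case q of [] \<Rightarrow> []
     | i # p \<Rightarrow> if i < length ts \<and> p \<in> pos (ts ! i) then \<sigma> i # g i p else i # p)"

lemma graft_iso_Nil [simp]: "graft_iso ts \<sigma> g [] = []"
  by (simp add: graft_iso_def)

lemma graft_iso_Cons:
  "i < length ts \<Longrightarrow> p \<in> pos (ts ! i) \<Longrightarrow> graft_iso ts \<sigma> g (i # p) = \<sigma> i # g i p"
  by (simp add: graft_iso_def)

context
  fixes ts ss :: "ptree list" and \<sigma> :: "nat \<Rightarrow> nat" and g :: "nat \<Rightarrow> nat list \<Rightarrow> nat list"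
  assumes \<sigma>: "\<sigma> permutes {..<length ts}" and len: "length ss = length ts"
    and g: "\<And>i. i < length ts \<Longrightarrow> g i \<in> isos (ts ! i) (ss ! \<sigma> i)"
begin

private lemma g_iso: "i < length ts \<Longrightarrow> prefix_iso (ts ! i) (ss ! \<sigma> i) (g i)"
  using g by (simp add: isos_def)

private lemma graft_iso_pos_length_take:
  assumes q: "q \<in> pos (PNode ts)"
  shows "graft_iso ts \<sigma> g q \<in> pos (PNode ss) \<and> length (graft_iso ts \<sigma> g q) = length q \<and>
    (\<forall>j. graft_iso ts \<sigma> g (take j q) = take j (graft_iso ts \<sigma> g q))"
proof (cases q)
  case (Cons i p)
  then have i: "i < length ts" and p: "p \<in> pos (ts ! i)" using q by auto
  have "graft_iso ts \<sigma> g (take j q) = take j (graft_iso ts \<sigma> g q)" for j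
    using Cons graft_iso_Cons[OF i p] graft_iso_Cons[OF i take_in_pos[OF p]]
      prefix_iso_take[OF g_iso[OF i] p] by (cases j) auto
  moreover have "\<sigma> i < length ts" using permutes_in_image[OF \<sigma>] i by simp
  ultimately show ?thesis
    using Cons graft_iso_Cons[OF i p] len
      prefix_iso_in_pos[OF g_iso[OF i] p] prefix_iso_length[OF g_iso[OF i] p] by simp
qed simp

lemma inj_on_graft_iso: "inj_on (graft_iso ts \<sigma> g) (pos (PNode ts))"
proof (rule inj_onI)
  fix q r assume q: "q \<in> pos (PNode ts)" and r: "r \<in> pos (PNode ts)"
    and eq: "graft_iso ts \<sigma> g q = graft_iso ts \<sigma> g r"
  show "q = r"
  proof (cases q; cases r)
    fix i p i' p' assume qr: "q = i # p" "r = i' # p'"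
    then have "\<sigma> i = \<sigma> i'" and "g i p = g i' p'"
      using q r eq by (auto simp: graft_iso_Cons)
    moreover from this(1) have "i = i'" by (metis permutes_inj[OF \<sigma>] injD)
    moreover have "inj_on (g i) (pos (ts ! i))"
      using q qr g_iso[THEN prefix_iso_inj] by simp
    ultimately show "q = r"
      using q r qr by (auto dest: inj_onD)
  qed (use q r eq in \<open>auto simp: graft_iso_Cons graft_iso_def\<close>)
qed

lemma graft_iso_surj: "q \<in> pos (PNode ss) \<Longrightarrow> \<exists>p\<in>pos (PNode ts). graft_iso ts \<sigma> g p = q"
proof (cases q)
  case (Cons j r)
  assume q: "q \<in> pos (PNode ss)"
  define i where "i = inv \<sigma> j"
  have j: "j < length ts" and r: "r \<in> pos (ss ! j)" using q Cons len by auto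
  then have i: "i < length ts" and "\<sigma> i = j"
    using permutes_inverses(1)[OF \<sigma>] permutes_in_image[OF permutes_inv[OF \<sigma>]]
    by (auto simp: i_def)
  then obtain p where "p \<in> pos (ts ! i)" "g i p = r"
    using prefix_iso_surj[OF g_iso[OF i]] r by auto
  then show ?thesis
    using Cons i \<open>\<sigma> i = j\<close> by (intro bexI[of _ "i # p"]) (auto simp: graft_iso_Cons)
qed (auto intro: bexI[of _ "[]"])

lemma graft_iso_in_isos: "graft_iso ts \<sigma> g \<in> isos (PNode ts) (PNode ss)"
proof -
  have "prefix_iso (PNode ts) (PNode ss) (graft_iso ts \<sigma> g)"
    using graft_iso_pos_length_take inj_on_graft_iso graft_iso_surj by (intro prefix_isoI) auto
  moreover have "graft_iso ts \<sigma> g q = q" if "q \<notin> pos (PNode ts)" for q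
    using that by (cases q) (auto simp: graft_iso_def)
  ultimately show ?thesis by (simp add: isos_def)
qed

lemma child_perm_graft_iso: "child_perm (graft_iso ts \<sigma> g) = \<sigma>"
proof
  fix i
  show "child_perm (graft_iso ts \<sigma> g) i = \<sigma> i"
  proof (cases "i < length ts")
    case True
    then show ?thesis using prefix_iso_Nil[OF g_iso[OF True]] by (simp add: child_perm_def graft_iso_def)
  qed (simp add: child_perm_def graft_iso_def permutes_not_in[OF \<sigma>])
qed

lemma branch_map_graft_iso: "i < length ts \<Longrightarrow> branch_map (graft_iso ts \<sigma> g) i = g i"
  using g by (auto simp: branch_map_def graft_iso_def isos_def fun_eq_iff)

end

context
  fixes ts :: "ptree list" and s :: ptree and f :: "nat list \<Rightarrow> nat list"
  assumes f: "f \<in> isos (PNode ts) s"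
begin

private lemma f_iso: "prefix_iso (PNode ts) s f"
  using f by (simp add: isos_def)

private lemma f_out: "p \<notin> pos (PNode ts) \<Longrightarrow> f p = p"
  using f by (simp add: isos_def)

private lemma s_eq: "s = PNode (children s)"
  by (cases s) simp

lemma isos_PNode_singleton: "i < length ts \<Longrightarrow> f [i] = [child_perm f i]"
  using prefix_iso_length[OF f_iso, of "[i]"] by (cases "f [i]") (auto simp: child_perm_def)

lemma isos_PNode_Cons:
  assumes "i < length ts" "p \<in> pos (ts ! i)"
  shows "f (i # p) = child_perm f i # branch_map f i p"
proof -
  have "take 1 (f (i # p)) = [child_perm f i]"
    using prefix_iso_take[OF f_iso, of "i # p" 1] assms isos_PNode_singleton by simp
  then show ?thesis by (cases "f (i # p)") (auto simp: branch_map_def)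
qed

lemma graft_iso_child_perm_branch_map: "graft_iso ts (child_perm f) (branch_map f) = f"
proof
  fix q
  show "graft_iso ts (child_perm f) (branch_map f) q = f q"
    using prefix_iso_Nil[OF f_iso] isos_PNode_Cons f_out
    by (cases q) (auto simp: graft_iso_def)
qed

lemma bij_betw_child_perm: "bij_betw (child_perm f) {..<length ts} {..<length (children s)}"
proof -
  have "f [i] \<in> pos s" if "i < length ts" for i
    using prefix_iso_in_pos[OF f_iso] that by simp
  then have into: "child_perm f ` {..<length ts} \<subseteq> {..<length (children s)}"
    using isos_PNode_singleton s_eq by (auto, metis Cons_in_pos_PNode)
  have "inj_on (child_perm f) {..<length ts}"
  proof (rule inj_onI)
    fix i j assume ij: "i \<in> {..<length ts}" "j \<in> {..<length ts}" "child_perm f i = child_perm f j"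
    then have "f [i] = f [j]" using isos_PNode_singleton by simp
    then show "i = j" using inj_onD[OF prefix_iso_inj[OF f_iso], of "[i]" "[j]"] ij by simp
  qed
  moreover have "j \<in> child_perm f ` {..<length ts}" if "j < length (children s)" for j
  proof -
    have "[j] \<in> pos s" using that s_eq by (metis Cons_in_pos_PNode Nil_in_pos)
    then obtain r where r: "r \<in> pos (PNode ts)" "f r = [j]"
      using prefix_iso_surj[OF f_iso] by blast
    then obtain i where "r = [i]"
      using prefix_iso_length[OF f_iso r(1)] by (cases r) auto
    then show ?thesis using r isos_PNode_singleton by force
  qed
  ultimately show ?thesis using into by (auto simp: bij_betw_def)
qed

lemma length_children_isos_PNode: "length (children s) = length ts"
  using bij_betw_same_card[OF bij_betw_child_perm] by simp

lemma child_perm_permutes: "child_perm f permutes {..<length ts}"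
proof (rule bij_imp_permutes)
  show "bij_betw (child_perm f) {..<length ts} {..<length ts}"
    using bij_betw_child_perm length_children_isos_PNode by simp
  show "child_perm f i = i" if "i \<notin> {..<length ts}" for i
    using that f_out[of "[i]"] by (simp add: child_perm_def)
qed

lemma inj_on_branch_map: "i < length ts \<Longrightarrow> inj_on (branch_map f i) (pos (ts ! i))"
proof (rule inj_onI)
  fix p q assume i: "i < length ts"
    and pq: "p \<in> pos (ts ! i)" "q \<in> pos (ts ! i)" "branch_map f i p = branch_map f i q"
  then have "f (i # p) = f (i # q)" using isos_PNode_Cons[OF i] by simp
  then show "p = q" using inj_onD[OF prefix_iso_inj[OF f_iso], of "i # p" "i # q"] i pq by simp
qed

lemma branch_map_surj:
  assumes i: "i < length ts" and q: "q \<in> pos (children s ! child_perm f i)"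
  shows "\<exists>p\<in>pos (ts ! i). branch_map f i p = q"
proof -
  have "child_perm f i # q \<in> pos s"
    using q s_eq i bij_betw_apply[OF bij_betw_child_perm] by (metis Cons_in_pos_PNode lessThan_iff)
  then obtain r where r: "r \<in> pos (PNode ts)" "f r = child_perm f i # q"
    using prefix_iso_surj[OF f_iso] by blast
  then obtain i' p where r_eq: "r = i' # p" "i' < length ts" "p \<in> pos (ts ! i')"
    using prefix_iso_Nil[OF f_iso] by (cases r) auto
  then have "i' = i"
    using r isos_PNode_Cons i bij_betw_child_perm by (auto simp: bij_betw_def dest: inj_onD)
  then show ?thesis
    using r r_eq isos_PNode_Cons by auto
qed

lemma branch_map_in_isos:
  assumes i: "i < length ts"
  shows "branch_map f i \<in> isos (ts ! i) (children s ! child_perm f i)"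
proof -
  have "prefix_iso (ts ! i) (children s ! child_perm f i) (branch_map f i)"
  proof (rule prefix_isoI)
    fix p assume p: "p \<in> pos (ts ! i)"
    have "child_perm f i # branch_map f i p \<in> pos s"
      using prefix_iso_in_pos[OF f_iso, of "i # p"] isos_PNode_Cons i p by simp
    then show "branch_map f i p \<in> pos (children s ! child_perm f i)"
      using s_eq by (metis Cons_in_pos_PNode)
    show "length (branch_map f i p) = length p"
      using prefix_iso_length[OF f_iso, of "i # p"] isos_PNode_Cons[OF i p] i p by simp
    show "branch_map f i (take j p) = take j (branch_map f i p)" for j
      using prefix_iso_take[OF f_iso, of "i # p" "Suc j"] isos_PNode_Cons[OF i]
        i p take_in_pos[OF p] by simp
  qed (use i inj_on_branch_map branch_map_surj in auto)
  moreover have "branch_map f i p = p" if "p \<notin> pos (ts ! i)" for p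
    using f_out[of "i # p"] i that by (simp add: branch_map_def)
  ultimately show ?thesis by (simp add: isos_def)
qed

end

section \<open>Counting isomorphisms\<close>

definition iso_pairs :: "ptree \<Rightarrow> (ptree \<times> (nat list \<Rightarrow> nat list)) set" where
  "iso_pairs t = {(s, f). f \<in> isos t s}"

definition branch_iso_data ::
    "ptree list \<Rightarrow> ((nat \<Rightarrow> nat) \<times> (nat \<Rightarrow> ptree \<times> (nat list \<Rightarrow> nat list))) set" where
  "branch_iso_data ts =
     {\<sigma>. \<sigma> permutes {..<length ts}} \<times> (\<Pi>\<^sub>E i\<in>{..<length ts}. iso_pairs (ts ! i))"

definition assemble ::
    "ptree list \<Rightarrow> (nat \<Rightarrow> nat) \<times> (nat \<Rightarrow> ptree \<times> (nat list \<Rightarrow> nat list))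
       \<Rightarrow> ptree \<times> (nat list \<Rightarrow> nat list)" where
  "assemble ts = (\<lambda>(\<sigma>, h).
     (PNode (map (\<lambda>j. fst (h (inv \<sigma> j))) [0..<length ts]), graft_iso ts \<sigma> (\<lambda>i. snd (h i))))"

definition disassemble ::
    "ptree list \<Rightarrow> ptree \<times> (nat list \<Rightarrow> nat list)
       \<Rightarrow> (nat \<Rightarrow> nat) \<times> (nat \<Rightarrow> ptree \<times> (nat list \<Rightarrow> nat list))" where
  "disassemble ts = (\<lambda>(s, f).
     (child_perm f, \<lambda>i\<in>{..<length ts}. (children s ! child_perm f i, branch_map f i)))"

lemma branch_iso_dataD:
  assumes "(\<sigma>, h) \<in> branch_iso_data ts"
  shows "\<sigma> permutes {..<length ts}" and "\<And>i. i \<ge> length ts \<Longrightarrow> h i = undefined"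
    and "\<And>i. i < length ts \<Longrightarrow> snd (h i) \<in> isos (ts ! i) (fst (h i))"
  using assms
  by (auto simp: branch_iso_data_def iso_pairs_def PiE_iff extensional_def case_prod_unfold)

lemma nth_map_inv_permutes:
  assumes "\<sigma> permutes {..<n}" "i < n"
  shows "map (\<lambda>j. x (inv \<sigma> j)) [0..<n] ! \<sigma> i = x i"
  using assms permutes_in_image[OF assms(1)] permutes_inverses(2)[OF assms(1)] by simp

lemma assemble_in_iso_pairs:
  assumes "x \<in> branch_iso_data ts"
  shows "assemble ts x \<in> iso_pairs (PNode ts)"
proof -
  obtain \<sigma> h where x: "x = (\<sigma>, h)" by fastforce
  note data = branch_iso_dataD[OF assms[unfolded x]]
  have "graft_iso ts \<sigma> (\<lambda>i. snd (h i))
      \<in> isos (PNode ts) (PNode (map (\<lambda>j. fst (h (inv \<sigma> j))) [0..<length ts]))"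
    using data by (intro graft_iso_in_isos)
      (simp_all add: nth_map_inv_permutes[OF data(1), where x = "\<lambda>i. fst (h i)"])
  then show ?thesis by (simp add: x assemble_def iso_pairs_def)
qed

lemma disassemble_in_branch_iso_data:
  assumes "y \<in> iso_pairs (PNode ts)"
  shows "disassemble ts y \<in> branch_iso_data ts"
proof -
  obtain s f where y: "y = (s, f)" and f: "f \<in> isos (PNode ts) s"
    using assms by (auto simp: iso_pairs_def)
  show ?thesis
    using child_perm_permutes[OF f] branch_map_in_isos[OF f]
    by (auto simp: y disassemble_def branch_iso_data_def iso_pairs_def)
qed

lemma disassemble_assemble:
  assumes x: "x \<in> branch_iso_data ts"
  shows "disassemble ts (assemble ts x) = x"
proof -
  obtain \<sigma> h where x_eq: "x = (\<sigma>, h)" by fastforce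
  note data = branch_iso_dataD[OF x[unfolded x_eq]]
  let ?F = "graft_iso ts \<sigma> (\<lambda>i. snd (h i))"
  have "(\<lambda>i\<in>{..<length ts}.
          (map (\<lambda>j. fst (h (inv \<sigma> j))) [0..<length ts] ! \<sigma> i, branch_map ?F i)) = h"
  proof
    fix i
    show "(\<lambda>i\<in>{..<length ts}.
            (map (\<lambda>j. fst (h (inv \<sigma> j))) [0..<length ts] ! \<sigma> i, branch_map ?F i)) i = h i"
      using data branch_map_graft_iso[where \<sigma> = \<sigma> and g = "\<lambda>i. snd (h i)"
        and ss = "map (\<lambda>j. fst (h (inv \<sigma> j))) [0..<length ts]"]
      by (cases "i < length ts") (auto simp: nth_map_inv_permutes[where x = "\<lambda>i. fst (h i)"])
  qed
  moreover have "child_perm ?F = \<sigma>"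
    using data by (intro child_perm_graft_iso[where ss = "map (\<lambda>j. fst (h (inv \<sigma> j))) [0..<length ts]"])
      (simp_all add: nth_map_inv_permutes[OF data(1), where x = "\<lambda>i. fst (h i)"])
  ultimately show ?thesis by (simp add: x_eq assemble_def disassemble_def)
qed

lemma assemble_disassemble:
  assumes y: "y \<in> iso_pairs (PNode ts)"
  shows "assemble ts (disassemble ts y) = y"
proof -
  obtain s f where y_eq: "y = (s, f)" and f: "f \<in> isos (PNode ts) s"
    using y by (auto simp: iso_pairs_def)
  let ?\<sigma> = "child_perm f"
  have \<sigma>: "?\<sigma> permutes {..<length ts}" by (rule child_perm_permutes[OF f])
  have "map (\<lambda>j. children s ! ?\<sigma> (inv ?\<sigma> j)) [0..<length ts] = children s"
    using length_children_isos_PNode[OF f] permutes_inverses(1)[OF \<sigma>]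
    by (intro nth_equalityI) auto
  moreover have "map (\<lambda>j. fst ((\<lambda>i\<in>{..<length ts}. (children s ! ?\<sigma> i, branch_map f i)) (inv ?\<sigma> j)))
      [0..<length ts] = map (\<lambda>j. children s ! ?\<sigma> (inv ?\<sigma> j)) [0..<length ts]"
    using permutes_in_image[OF permutes_inv[OF \<sigma>]] by simp
  moreover have "graft_iso ts ?\<sigma> (\<lambda>i. snd ((\<lambda>i\<in>{..<length ts}. (children s ! ?\<sigma> i, branch_map f i)) i))
      = graft_iso ts ?\<sigma> (branch_map f)"
    by (auto simp: graft_iso_def fun_eq_iff split: list.split)
  moreover have "PNode (children s) = s" by (cases s) simp
  ultimately show ?thesis
    by (simp add: y_eq assemble_def disassemble_def graft_iso_child_perm_branch_map[OF f])
qed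

lemma bij_betw_assemble: "bij_betw (assemble ts) (branch_iso_data ts) (iso_pairs (PNode ts))"
  by (rule bij_betw_byWitness[where f' = "disassemble ts"])
    (auto simp: disassemble_assemble assemble_disassemble
      intro: assemble_in_iso_pairs disassemble_in_branch_iso_data)

fun child_orderings :: "ptree \<Rightarrow> nat" where
  "child_orderings (PNode ts) = fact (length ts) * (\<Prod>t\<leftarrow>ts. child_orderings t)"

lemma card_iso_pairs: "finite (iso_pairs t) \<and> card (iso_pairs t) = child_orderings t"
proof (induction t)
  case (PNode ts)
  then have fin: "finite (iso_pairs (ts ! i))"
    and card: "card (iso_pairs (ts ! i)) = child_orderings (ts ! i)" if "i < length ts" for i
    using that by simp_all
  have "finite (branch_iso_data ts)"
    using fin by (auto simp: branch_iso_data_def intro!: finite_PiE finite_permutations)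
  moreover have "card (branch_iso_data ts) = fact (length ts) * (\<Prod>i<length ts. card (iso_pairs (ts ! i)))"
    by (simp add: branch_iso_data_def card_cartesian_product card_PiE card_permutations)
  moreover have "(\<Prod>i<length ts. card (iso_pairs (ts ! i))) = (\<Prod>t\<leftarrow>ts. child_orderings t)"
    using card by (simp add: prod.list_conv_set_nth atLeast0LessThan)
  ultimately show ?case
    using bij_betw_assemble[of ts] by (metis bij_betw_finite bij_betw_same_card child_orderings.simps)
qed

definition iso_class :: "ptree \<Rightarrow> ptree set" where
  "iso_class t = {s. isos t s \<noteq> {}}"

lemma iso_pairs_eq_Sigma: "iso_pairs t = Sigma (iso_class t) (isos t)"
  by (auto simp: iso_pairs_def iso_class_def)

lemma finite_iso_class: "finite (iso_class t)"
proof -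
  have "iso_class t \<subseteq> fst ` iso_pairs t" by (force simp: iso_pairs_def iso_class_def)
  then show ?thesis using card_iso_pairs[of t] by (meson finite_imageI finite_subset)
qed

lemma finite_isos: "finite (isos t s)"
proof -
  have "isos t s \<subseteq> snd ` iso_pairs t" by (force simp: iso_pairs_def)
  then show ?thesis using card_iso_pairs[of t] by (meson finite_imageI finite_subset)
qed

lemma child_orderings_eq_card_iso_class_Aut: "child_orderings t = card (iso_class t) * card (Aut t)"
proof -
  have "child_orderings t = (\<Sum>s\<in>iso_class t. card (isos t s))"
    using card_iso_pairs[of t] finite_iso_class finite_isos by (simp add: iso_pairs_eq_Sigma)
  also have "\<dots> = (\<Sum>s\<in>iso_class t. card (Aut t))"
  proof (rule sum.cong[OF refl])
    fix s assume "s \<in> iso_class t"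
    then obtain h where "h \<in> isos t s" by (auto simp: iso_class_def)
    then show "card (isos t s) = card (Aut t)" by (metis bij_betw_comp_Aut bij_betw_same_card)
  qed
  finally show ?thesis by simp
qed

lemma iso_invariant:
  assumes step: "\<And>ts ss. mset (map F ts) = mset (map F ss) \<Longrightarrow> F (PNode ts) = F (PNode ss)"
  shows "isos t s \<noteq> {} \<Longrightarrow> F s = F t"
proof (induction t arbitrary: s)
  case (PNode ts)
  obtain f where f: "f \<in> isos (PNode ts) s" using PNode.prems by blast
  let ?\<sigma> = "child_perm f"
  have \<sigma>: "?\<sigma> permutes {..<length ts}" by (rule child_perm_permutes[OF f])
  have len: "length (children s) = length ts" by (rule length_children_isos_PNode[OF f])
  have IH: "F (children s ! ?\<sigma> i) = F (ts ! i)" if "i < length ts" for i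
    using PNode.IH[OF nth_mem[OF that]] branch_map_in_isos[OF f that] by blast
  have "permute_list ?\<sigma> (map F (children s)) = map F ts"
  proof (rule nth_equalityI)
    fix i assume "i < length (permute_list ?\<sigma> (map F (children s)))"
    then have i: "i < length ts" using len by simp
    then have "?\<sigma> i < length ts" using permutes_in_image[OF \<sigma>] by simp
    then show "permute_list ?\<sigma> (map F (children s)) ! i = map F ts ! i"
      using i IH[OF i] len permute_list_nth[of ?\<sigma> "map F (children s)" i] \<sigma> by simp
  qed (simp add: len)
  then have "mset (map F ts) = mset (map F (children s))"
    by (metis \<sigma> len length_map mset_permute_list)
  then have "F (PNode ts) = F (PNode (children s))" by (rule step)
  moreover have "PNode (children s) = s" by (cases s) simp
  ultimately show ?case by simp
qed

lemma nleaves_isos: "isos t s \<noteq> {} \<Longrightarrow> nleaves s = nleaves t"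
proof (rule iso_invariant)
  fix ts ss assume eq: "mset (map nleaves ts) = mset (map nleaves ss)"
  have "length ts = length ss" using mset_eq_length[OF eq] by simp
  moreover have "(\<Sum>t\<leftarrow>ts. nleaves t) = (\<Sum>t\<leftarrow>ss. nleaves t)" by (metis eq sum_mset_sum_list)
  ultimately show "nleaves (PNode ts) = nleaves (PNode ss)" by (auto simp: nleaves_PNode)
qed

lemma nverts_isos: "isos t s \<noteq> {} \<Longrightarrow> nverts s = nverts t"
proof (rule iso_invariant)
  fix ts ss assume eq: "mset (map nverts ts) = mset (map nverts ss)"
  have "length ts = length ss" using mset_eq_length[OF eq] by simp
  moreover have "(\<Sum>t\<leftarrow>ts. nverts t) = (\<Sum>t\<leftarrow>ss. nverts t)" by (metis eq sum_mset_sum_list)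
  ultimately show "nverts (PNode ts) = nverts (PNode ss)" by (auto simp: nverts_PNode)
qed

lemma child_orderings_isos: "isos t s \<noteq> {} \<Longrightarrow> child_orderings s = child_orderings t"
proof (rule iso_invariant)
  fix ts ss assume eq: "mset (map child_orderings ts) = mset (map child_orderings ss)"
  have "length ts = length ss" using mset_eq_length[OF eq] by simp
  moreover have "(\<Prod>t\<leftarrow>ts. child_orderings t) = (\<Prod>t\<leftarrow>ss. child_orderings t)"
    by (metis eq prod_mset_prod_list)
  ultimately show "child_orderings (PNode ts) = child_orderings (PNode ss)" by simp
qed

lemma valid_rtree_isos: "isos t s \<noteq> {} \<Longrightarrow> valid_rtree s = valid_rtree t"
proof (rule iso_invariant)
  fix ts ss assume eq: "mset (map valid_rtree ts) = mset (map valid_rtree ss)"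
  have "length ts = length ss" using mset_eq_length[OF eq] by simp
  moreover have "(\<forall>b\<in>set (map valid_rtree ts). b) = (\<forall>b\<in>set (map valid_rtree ss). b)"
    by (simp only: mset_eq_setD[OF eq])
  ultimately show "valid_rtree (PNode ts) = valid_rtree (PNode ss)"
    by (simp add: valid_rtree_PNode)
qed

section \<open>From isomorphism classes to plane trees\<close>

definition plane_weight :: "ptree \<Rightarrow> real" where
  "plane_weight t = (-1) ^ nverts t / real (child_orderings t)"

lemma sum_plane_weight_iso_class:
  "(\<Sum>s\<in>iso_class t. plane_weight s) = (-1) ^ nverts t / real (card (Aut t))"
proof -
  have "(\<Sum>s\<in>iso_class t. plane_weight s) = (\<Sum>s\<in>iso_class t. (-1) ^ nverts t / real (child_orderings t))"
    by (intro sum.cong refl) (simp add: plane_weight_def iso_class_def nverts_isos child_orderings_isos)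
  also have "\<dots> = real (card (iso_class t)) * ((-1) ^ nverts t / real (card (iso_class t) * card (Aut t)))"
    by (simp add: child_orderings_eq_card_iso_class_Aut)
  also have "\<dots> = (-1) ^ nverts t / real (card (Aut t))"
  proof -
    have "t \<in> iso_class t" using id_in_isos by (auto simp: iso_class_def)
    then have "card (iso_class t) \<noteq> 0" using finite_iso_class by (metis card_0_eq empty_iff)
    then show ?thesis by simp
  qed
  finally show ?thesis .
qed

lemma iso_rel_iff: "(s, t) \<in> iso_rel \<longleftrightarrow> valid_rtree s \<and> valid_rtree t \<and> isos s t \<noteq> {}"
  by (simp add: iso_rel_def isos_nonempty_iff tree_iso_iff_prefix_iso)

lemma equiv_iso_rel: "equiv {t. valid_rtree t} iso_rel"
proof (rule equivI)
  show "iso_rel \<subseteq> {t. valid_rtree t} \<times> {t. valid_rtree t}" by (auto simp: iso_rel_iff)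
  show "refl_on {t. valid_rtree t} iso_rel" using id_in_isos by (auto simp: refl_on_def iso_rel_iff)
  show "sym iso_rel" unfolding sym_def iso_rel_iff using isos_sym by blast
  show "trans iso_rel" unfolding trans_def iso_rel_iff using isos_trans by blast
qed

lemma iso_rel_Image: "valid_rtree t \<Longrightarrow> iso_rel `` {t} = iso_class t"
  using valid_rtree_isos[of t] unfolding iso_class_def by (auto simp: iso_rel_iff) blast

lemma rtree_classes_rep:
  assumes "C \<in> rtree_classes"
  shows "valid_rtree (rep C)" and "C = iso_class (rep C)"
proof -
  obtain t where t: "valid_rtree t" and C: "C = iso_rel `` {t}"
    using assms by (auto simp: rtree_classes_def elim: quotientE)
  then have "t \<in> C" using equiv_class_self[OF equiv_iso_rel] by simp
  then have "rep C \<in> C" unfolding rep_def by (rule someI)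
  then have rel: "(t, rep C) \<in> iso_rel" using C by simp
  then show valid: "valid_rtree (rep C)" by (simp add: iso_rel_iff)
  have "C = iso_rel `` {rep C}" using C equiv_class_eq[OF equiv_iso_rel rel] by simp
  then show "C = iso_class (rep C)" using iso_rel_Image[OF valid] by simp
qed

definition plane_trees :: "nat \<Rightarrow> ptree set" where
  "plane_trees n = {t. valid_rtree t \<and> nleaves t = n}"

lemma finite_valid_nleaves_le: "finite {t. valid_rtree t \<and> nleaves t \<le> n}"
proof (induction n)
  case 0
  have empty: "{t. valid_rtree t \<and> nleaves t \<le> 0} = {}"
    using nleaves_pos by (simp add: Collect_empty_eq)
  show ?case unfolding empty by simp
next
  case (Suc n)
  let ?B = "{t. valid_rtree t \<and> nleaves t \<le> n}"
  have "{t. valid_rtree t \<and> nleaves t \<le> Suc n} \<subseteq> PNode ` {ts. set ts \<subseteq> ?B \<and> length ts \<le> Suc n}"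
  proof
    fix t assume t: "t \<in> {t. valid_rtree t \<and> nleaves t \<le> Suc n}"
    obtain ts where ts: "t = PNode ts" by (cases t)
    have valid: "valid_rtree (PNode ts)" and le: "nleaves (PNode ts) \<le> Suc n" using t ts by simp_all
    have "length ts \<le> Suc n" using le length_le_nleaves_PNode[of ts] by simp
    moreover have "set ts \<subseteq> ?B"
    proof
      fix u assume u: "u \<in> set ts"
      then have "valid_rtree u" using valid by (simp add: valid_rtree_PNode)
      moreover have "nleaves u < nleaves (PNode ts)" by (rule nleaves_child_less[OF valid u])
      ultimately show "u \<in> ?B" using le by simp
    qed
    ultimately show "t \<in> PNode ` {ts. set ts \<subseteq> ?B \<and> length ts \<le> Suc n}" using ts by blast
  qed
  moreover have "finite {ts. set ts \<subseteq> ?B \<and> length ts \<le> Suc n}"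
    using Suc.IH by (rule finite_lists_length_le)
  ultimately show ?case by (meson finite_imageI finite_subset)
qed

lemma finite_plane_trees: "finite (plane_trees n)"
  by (rule finite_subset[OF _ finite_valid_nleaves_le[of n]]) (auto simp: plane_trees_def)

lemma rtree_class_subset_plane_trees:
  assumes "C \<in> rtree_classes"
  shows "C \<subseteq> plane_trees (nleaves (rep C))"
proof
  fix s assume "s \<in> C"
  then have "s \<in> iso_class (rep C)" using assms rtree_classes_rep(2)[of C] by simp
  then have "isos (rep C) s \<noteq> {}" by (simp add: iso_class_def)
  then show "s \<in> plane_trees (nleaves (rep C))"
    using assms rtree_classes_rep(1)[of C] valid_rtree_isos nleaves_isos by (simp add: plane_trees_def)
qed

lemma Union_rtree_classes_nleaves: "\<Union>{C \<in> rtree_classes. nleaves (rep C) = n} = plane_trees n"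
proof
  show "plane_trees n \<subseteq> \<Union>{C \<in> rtree_classes. nleaves (rep C) = n}"
  proof
    fix t assume "t \<in> plane_trees n"
    then have t: "valid_rtree t" "nleaves t = n" by (simp_all add: plane_trees_def)
    let ?C = "iso_rel `` {t}"
    have C: "?C \<in> rtree_classes" using t by (auto simp: rtree_classes_def intro: quotientI)
    have "t \<in> ?C" using t equiv_class_self[OF equiv_iso_rel] by simp
    then have "t \<in> iso_class (rep ?C)" using rtree_classes_rep(2)[OF C] by simp
    then have "nleaves (rep ?C) = n" using t by (simp add: iso_class_def nleaves_isos)
    then show "t \<in> \<Union>{C \<in> rtree_classes. nleaves (rep C) = n}" using C \<open>t \<in> ?C\<close> by blast
  qed
qed (use rtree_class_subset_plane_trees in blast)

lemma rtree_gf_nth: "rtree_gf $ n = (\<Sum>t\<in>plane_trees n. plane_weight t)"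
proof -
  let ?A = "{C \<in> rtree_classes. nleaves (rep C) = n}"
  have "\<forall>C\<in>?A. \<forall>D\<in>?A. C \<noteq> D \<longrightarrow> C \<inter> D = {}"
    using quotient_disj[OF equiv_iso_rel] by (auto simp: rtree_classes_def)
  moreover have "\<forall>C\<in>?A. finite C"
    using rtree_class_subset_plane_trees finite_plane_trees finite_subset by blast
  ultimately have "(\<Sum>t\<in>plane_trees n. plane_weight t) = (\<Sum>C\<in>?A. \<Sum>t\<in>C. plane_weight t)"
    using sum.Union_disjoint[of ?A plane_weight] Union_rtree_classes_nleaves[of n] by simp
  also have "\<dots> = (\<Sum>C\<in>?A. (-1) ^ nverts (rep C) / real (card (Aut (rep C))))"
  proof (rule sum.cong[OF refl])
    fix C assume "C \<in> ?A"
    then have "C = iso_class (rep C)" using rtree_classes_rep(2) by blast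
    then show "(\<Sum>t\<in>C. plane_weight t) = (-1) ^ nverts (rep C) / real (card (Aut (rep C)))"
      using sum_plane_weight_iso_class[of "rep C"] by simp
  qed
  also have "\<dots> = rtree_gf $ n" by (simp add: rtree_gf_def)
  finally show ?thesis ..
qed

section \<open>The functional equation\<close>

definition plane_forests :: "nat \<Rightarrow> nat \<Rightarrow> ptree list set" where
  "plane_forests k n = {ts. length ts = k \<and> (\<forall>t\<in>set ts. valid_rtree t) \<and> (\<Sum>t\<leftarrow>ts. nleaves t) = n}"

lemma finite_plane_forests: "finite (plane_forests k n)"
proof -
  have "plane_forests k n \<subseteq> {ts. set ts \<subseteq> {t. valid_rtree t \<and> nleaves t \<le> n} \<and> length ts \<le> k}"
    by (auto simp: plane_forests_def member_le_sum_list)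
  moreover have "finite {ts. set ts \<subseteq> {t. valid_rtree t \<and> nleaves t \<le> n} \<and> length ts \<le> k}"
    by (rule finite_lists_length_le[OF finite_valid_nleaves_le])
  ultimately show ?thesis by (rule finite_subset)
qed

lemma bij_betw_Cons_plane_forests:
  "bij_betw (\<lambda>(j, t, ts). t # ts)
     (SIGMA j:{0..n}. plane_trees j \<times> plane_forests k (n - j)) (plane_forests (Suc k) n)"
proof (rule bij_betw_imageI)
  show "inj_on (\<lambda>(j, t, ts). t # ts) (SIGMA j:{0..n}. plane_trees j \<times> plane_forests k (n - j))"
    by (rule inj_onI) (auto simp: plane_trees_def)
  show "(\<lambda>(j, t, ts). t # ts) ` (SIGMA j:{0..n}. plane_trees j \<times> plane_forests k (n - j))
      = plane_forests (Suc k) n"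
  proof (intro equalityI subsetI)
    fix us assume "us \<in> plane_forests (Suc k) n"
    then obtain t ts where "us = t # ts" "(nleaves t, t, ts) \<in> (SIGMA j:{0..n}. plane_trees j \<times> plane_forests k (n - j))"
      by (cases us) (auto simp: plane_trees_def plane_forests_def)
    then show "us \<in> (\<lambda>(j, t, ts). t # ts) ` (SIGMA j:{0..n}. plane_trees j \<times> plane_forests k (n - j))"
      by force
  qed (auto simp: plane_trees_def plane_forests_def)
qed

lemma rtree_gf_power_nth: "(rtree_gf ^ k) $ n = (\<Sum>ts\<in>plane_forests k n. \<Prod>t\<leftarrow>ts. plane_weight t)"
proof (induction k arbitrary: n)
  case 0
  have "plane_forests 0 n = (if n = 0 then {[]} else {})" by (auto simp: plane_forests_def)
  then show ?case by simp
next
  case (Suc k)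
  have "(rtree_gf ^ Suc k) $ n = (\<Sum>j=0..n. rtree_gf $ j * (rtree_gf ^ k) $ (n - j))"
    by (simp add: fps_mult_nth)
  also have "\<dots> = (\<Sum>j=0..n. \<Sum>(t, ts)\<in>plane_trees j \<times> plane_forests k (n - j).
                    plane_weight t * (\<Prod>u\<leftarrow>ts. plane_weight u))"
    by (simp add: rtree_gf_nth Suc.IH sum_product sum.cartesian_product)
  also have "\<dots> = (\<Sum>(j, t, ts)\<in>(SIGMA j:{0..n}. plane_trees j \<times> plane_forests k (n - j)).
                    \<Prod>u\<leftarrow>t # ts. plane_weight u)"
    by (subst sum.Sigma) (auto simp: finite_plane_trees finite_plane_forests case_prod_unfold)
  also have "\<dots> = (\<Sum>ts\<in>plane_forests (Suc k) n. \<Prod>t\<leftarrow>ts. plane_weight t)"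
    using sum.reindex_bij_betw[OF bij_betw_Cons_plane_forests, of "\<lambda>ts. \<Prod>t\<leftarrow>ts. plane_weight t"]
    by (simp add: case_prod_unfold)
  finally show ?case .
qed

lemma prod_list_plane_weight:
  "(\<Prod>t\<leftarrow>ts. plane_weight t) = (-1) ^ (\<Sum>t\<leftarrow>ts. nverts t) / real (\<Prod>t\<leftarrow>ts. child_orderings t)"
  by (induction ts) (simp_all add: plane_weight_def power_add)

lemma plane_weight_PNode:
  "ts \<noteq> [] \<Longrightarrow> plane_weight (PNode ts) = - (\<Prod>t\<leftarrow>ts. plane_weight t) / fact (length ts)"
  unfolding prod_list_plane_weight by (simp add: plane_weight_def nverts_PNode)

lemma PNode_in_plane_trees_iff:
  "PNode ts \<in> plane_trees n \<longleftrightarrow> (ts = [] \<and> n = 1) \<or> (\<exists>k\<in>{2..n}. ts \<in> plane_forests k n)"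
proof (cases "ts = []")
  case False
  have "length ts \<le> (\<Sum>t\<leftarrow>ts. nleaves t)"
    using length_le_nleaves_PNode[of ts] False by (simp add: nleaves_PNode)
  moreover have "length ts \<noteq> 0" using False by simp
  then have "length ts \<noteq> 1 \<longleftrightarrow> 2 \<le> length ts" by arith
  ultimately show ?thesis
    using False by (auto simp: plane_trees_def plane_forests_def valid_rtree_PNode nleaves_PNode)
qed (auto simp: plane_trees_def plane_forests_def nleaves_PNode valid_rtree_PNode)

lemma rtree_gf_nth_recursion:
  "rtree_gf $ n = (if n = 1 then 1 else 0) - (\<Sum>k=2..n. (rtree_gf ^ k) $ n / fact k)"
proof -
  let ?F = "\<lambda>k. plane_forests k n"
  have split: "plane_trees n = (if n = 1 then {PNode []} else {}) \<union> PNode ` (\<Union>k\<in>{2..n}. ?F k)"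
  proof (intro set_eqI)
    fix t
    show "t \<in> plane_trees n \<longleftrightarrow> t \<in> (if n = 1 then {PNode []} else {}) \<union> PNode ` (\<Union>k\<in>{2..n}. ?F k)"
      using PNode_in_plane_trees_iff by (cases t) auto
  qed
  have disjoint: "(if n = 1 then {PNode []} else {}) \<inter> PNode ` (\<Union>k\<in>{2..n}. ?F k) = {}"
    by (auto simp: plane_forests_def)
  have "rtree_gf $ n = (if n = 1 then 1 else 0) + (\<Sum>t\<in>PNode ` (\<Union>k\<in>{2..n}. ?F k). plane_weight t)"
    unfolding rtree_gf_nth split using disjoint
    by (subst sum.union_disjoint) (auto simp: finite_plane_forests plane_weight_def nverts_PNode)
  also have "(\<Sum>t\<in>PNode ` (\<Union>k\<in>{2..n}. ?F k). plane_weight t)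
      = (\<Sum>ts\<in>(\<Union>k\<in>{2..n}. ?F k). plane_weight (PNode ts))"
    by (simp add: sum.reindex inj_on_def)
  also have "\<dots> = (\<Sum>k=2..n. \<Sum>ts\<in>?F k. plane_weight (PNode ts))"
    by (rule sum.UNION_disjoint) (simp, simp add: finite_plane_forests, auto simp: plane_forests_def)
  also have "\<dots> = (\<Sum>k=2..n. - (rtree_gf ^ k) $ n / fact k)"
  proof (rule sum.cong[OF refl])
    fix k assume k: "k \<in> {2..n}"
    have "(\<Sum>ts\<in>?F k. plane_weight (PNode ts)) = (\<Sum>ts\<in>?F k. - (\<Prod>t\<leftarrow>ts. plane_weight t) / fact k)"
    proof (rule sum.cong[OF refl])
      fix ts assume "ts \<in> ?F k"
      then have len: "length ts = k" by (simp add: plane_forests_def)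
      then have "ts \<noteq> []" using k by auto
      then show "plane_weight (PNode ts) = - (\<Prod>t\<leftarrow>ts. plane_weight t) / fact k"
        using len by (simp add: plane_weight_PNode)
    qed
    then show "(\<Sum>ts\<in>?F k. plane_weight (PNode ts)) = - (rtree_gf ^ k) $ n / fact k"
      by (simp add: rtree_gf_power_nth sum_divide_distrib sum_negf)
  qed
  finally show ?thesis by (simp add: sum_negf)
qed

lemma fps_exp_minus_one_compose_rtree_gf: "(fps_exp 1 - 1) oo rtree_gf = fps_X"
proof (rule fps_ext)
  fix n
  show "((fps_exp 1 - 1) oo rtree_gf) $ n = fps_X $ n"
  proof (cases "n = 0")
    case False
    have "((fps_exp 1 - 1) oo rtree_gf) $ n = (\<Sum>k=1..n. (rtree_gf ^ k) $ n / fact k)"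
      by (simp add: fps_compose_nth sum.atLeast_Suc_atMost)
    also have "\<dots> = rtree_gf $ n + (\<Sum>k=2..n. (rtree_gf ^ k) $ n / fact k)"
      using False by (simp add: sum.atLeast_Suc_atMost numeral_2_eq_2)
    also have "\<dots> = fps_X $ n"
      by (subst rtree_gf_nth_recursion) simp
    finally show ?thesis .
  qed simp
qed

lemma rtree_gf_eq_fps_ln: "rtree_gf = fps_ln 1"
proof -
  let ?E = "fps_exp (1::real) - 1"
  have gf_0: "rtree_gf $ 0 = 0" using rtree_gf_nth_recursion[of 0] by simp
  have "fps_inv ?E = fps_inv ?E oo (?E oo rtree_gf)"
    by (simp add: fps_exp_minus_one_compose_rtree_gf)
  also have "\<dots> = rtree_gf"
    using fps_compose_assoc[OF gf_0, of ?E "fps_inv ?E"] fps_inv[of ?E] gf_0 by simp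
  finally show ?thesis by (simp add: fps_ln_fps_exp_inv)
qed

theorem proposition4p1:
  shows "rtree_gf = fps_ln 1 \<and>
         rtree_gf = Abs_fps (\<lambda>n. if n = 0 then 0 else (-1) ^ (n + 1) / real n)"
proof
  show "rtree_gf = fps_ln 1" by (rule rtree_gf_eq_fps_ln)
  show "rtree_gf = Abs_fps (\<lambda>n. if n = 0 then 0 else (-1) ^ (n + 1) / real n)"
    unfolding rtree_gf_eq_fps_ln
  proof (rule fps_ext)
    show "fps_ln 1 $ n = Abs_fps (\<lambda>n. if n = 0 then 0 else (-1) ^ (n + 1) / real n) $ n" for n
      by (cases n) (simp_all add: fps_ln_nth)
  qed
qed

end
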